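(* Let $C$ be a finite normal flag simplicial complex of dimension $d$ with $n$ vertices. Then $C$ satisfies the non-revisiting path property; in particular $\operatorname{diam}(C)\le n-d-1$.
   Context: A simplicial complex is flag if every inclusion-minimal set of vertices that does not form a face has exactly $2$ elements. For a face $\sigma$ of $C$, the star $\mathrm{St}(\sigma,C)$ is the smallest subcomplex of $C$ containing all faces of $C$ that contain $\sigma$. For a pure simplicial $d$-complex $C$, the dual graph (facet-ridge graph) $G^\ast(C)$ has the $d$-faces (facets) of $C$ as vertices, two facets being adjacent if they intersect in a $(d-1)$-face. A pure simplicial complex $C$ is normal if $G^\ast(\mathrm{St}(\sigma,C))$ is connected for every face $\sigma$ of $C$, including the empty face (whose star is $C$). $\operatorname{diam}(C)$ is the diameter of $G^\ast(C)$. A facet path is a map $\Gamma$ from an integer interval $I$ to the set of facets such that consecutive facets $\Gamma(i),\Gamma(i+1)$ intersect in a $(d-1)$-face. A facet path $\Gamma$ is non-revisiting if whenever $\Gamma(i)$ and $\Gamma(j)$ both lie in $\mathrm{St}(v,C)$ for some vertex $v$, then $\Gamma(k)\in\mathrm{St}(v,C)$ for all $k$ between $i$ and $j$. $C$ has the non-revisiting path property if any two facets of $C$ are joined by a non-revisiting facet path. *)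

theory Defs
  imports Main
begin

definition simplicial_complex :: "'a set set \<Rightarrow> bool" where
  "simplicial_complex C \<longleftrightarrow> {} \<in> C \<and> (\<forall>\<sigma>\<in>C. finite \<sigma>) \<and> (\<forall>\<sigma>\<in>C. \<forall>\<tau>. \<tau> \<subseteq> \<sigma> \<longrightarrow> \<tau> \<in> C)"

definition vertices :: "'a set set \<Rightarrow> 'a set" where
  "vertices C = \<Union>C"

definition facets :: "'a set set \<Rightarrow> 'a set set" where
  "facets C = {\<sigma>\<in>C. \<forall>\<tau>\<in>C. \<sigma> \<subseteq> \<tau> \<longrightarrow> \<tau> = \<sigma>}"

definition has_dim :: "'a set set \<Rightarrow> nat \<Rightarrow> bool" where
  "has_dim C d \<longleftrightarrow> (\<exists>\<sigma>\<in>C. card \<sigma> = d + 1) \<and> (\<forall>\<sigma>\<in>C. card \<sigma> \<le> d + 1)"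

definition pure :: "'a set set \<Rightarrow> bool" where
  "pure C \<longleftrightarrow> (\<forall>F\<in>facets C. \<forall>G\<in>facets C. card F = card G)"

definition flag :: "'a set set \<Rightarrow> bool" where
  "flag C \<longleftrightarrow> (\<forall>S. S \<subseteq> vertices C \<and> S \<notin> C \<and> (\<forall>T. T \<subset> S \<longrightarrow> T \<in> C) \<longrightarrow> card S = 2)"

definition St :: "'a set \<Rightarrow> 'a set set \<Rightarrow> 'a set set" where
  "St \<sigma> C = {\<tau>\<in>C. \<exists>\<rho>\<in>C. \<sigma> \<subseteq> \<rho> \<and> \<tau> \<subseteq> \<rho>}"

definition ridge_adj :: "'a set \<Rightarrow> 'a set \<Rightarrow> bool" where
  "ridge_adj F G \<longleftrightarrow> card F = card G \<and> card (F \<inter> G) + 1 = card F"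

text \<open>A facet path in K, represented by the list of its facets
(indices 0..length-1 play the role of the integer interval).\<close>
definition facet_path :: "'a set set \<Rightarrow> 'a set list \<Rightarrow> bool" where
  "facet_path K xs \<longleftrightarrow> xs \<noteq> [] \<and> set xs \<subseteq> facets K \<and>
     (\<forall>i. Suc i < length xs \<longrightarrow> ridge_adj (xs ! i) (xs ! Suc i))"

definition path_between :: "'a set set \<Rightarrow> 'a set list \<Rightarrow> 'a set \<Rightarrow> 'a set \<Rightarrow> bool" where
  "path_between K xs F G \<longleftrightarrow> facet_path K xs \<and> hd xs = F \<and> last xs = G"

definition dual_connected :: "'a set set \<Rightarrow> bool" where
  "dual_connected K \<longleftrightarrow> (\<forall>F\<in>facets K. \<forall>G\<in>facets K. \<exists>xs. path_between K xs F G)"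

text \<open>Normal: pure and the dual graph of every star (including that of the empty face,
which is C itself) is connected.\<close>
definition normal :: "'a set set \<Rightarrow> bool" where
  "normal C \<longleftrightarrow> pure C \<and> (\<forall>\<sigma>\<in>C. dual_connected (St \<sigma> C))"

definition non_revisiting :: "'a set set \<Rightarrow> 'a set list \<Rightarrow> bool" where
  "non_revisiting C xs \<longleftrightarrow> (\<forall>v\<in>vertices C. \<forall>i j k. i \<le> k \<and> k \<le> j \<and> j < length xs \<and>
      xs ! i \<in> St {v} C \<and> xs ! j \<in> St {v} C \<longrightarrow> xs ! k \<in> St {v} C)"

definition non_revisiting_path_property :: "'a set set \<Rightarrow> bool" where
  "non_revisiting_path_property C \<longleftrightarrow>
     (\<forall>F\<in>facets C. \<forall>G\<in>facets C. \<exists>xs. path_between C xs F G \<and> non_revisiting C xs)"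

definition facet_dist :: "'a set set \<Rightarrow> 'a set \<Rightarrow> 'a set \<Rightarrow> nat" where
  "facet_dist C F G = (LEAST k. \<exists>xs. path_between C xs F G \<and> length xs = k + 1)"

definition diam :: "'a set set \<Rightarrow> nat" where
  "diam C = Max {facet_dist C F G | F G. F \<in> facets C \<and> G \<in> facets C}"

end

theory Submission
  imports Defs
begin

text \<open>The key lemma: for a face \<open>\<alpha>\<close>, a nonempty set \<open>X\<close> of
  vertices of its link and a facet \<open>F \<supseteq> \<alpha>\<close>, there is a non-revisiting path in the star of \<open>\<alpha>\<close>
  from \<open>F\<close> to a facet meeting \<open>X\<close>, which meets \<open>X\<close> only at its end and along which the
  neighbours of the vertices it finally reaches in \<open>X\<close>, once present, stay. It is proved by
  induction on the codimension of \<open>\<alpha>\<close>. In codimension one a single step suffices by flagness.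
  Otherwise the graph of the link is connected by normality; layer it by distance from \<open>X\<close> and
  descend one layer at a time, each descent being a path in the star of a strictly larger face.

  Two facets of a star are joined by walking to the first facet containing a vertex \<open>v\<close> of the
  target and recursing in the star of \<open>\<alpha> \<union> {v}\<close>. Finally, each step of a non-revisiting path
  abandons for good a vertex not in its last facet, so it has at most \<open>n - d - 1\<close> steps.\<close>

section \<open>Non-revisiting lists of sets\<close>

text \<open>Non-revisiting is formulated on vertices rather than on vertex stars: a facet lies in
  \<open>St {v} C\<close> iff it contains \<open>v\<close>.\<close>

definition nonrevisiting :: "'a set list \<Rightarrow> bool" where
  "nonrevisiting P \<longleftrightarrow>
     (\<forall>y i j k. i \<le> j \<longrightarrow> j \<le> k \<longrightarrow> k < length P \<longrightarrow> y \<in> P!i \<longrightarrow> y \<in> P!k \<longrightarrow> y \<in> P!j)"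

definition persistent :: "'a set \<Rightarrow> 'a set list \<Rightarrow> bool" where
  "persistent W P \<longleftrightarrow> (\<forall>y\<in>W. \<forall>i j. i \<le> j \<longrightarrow> j < length P \<longrightarrow> y \<in> P!i \<longrightarrow> y \<in> P!j)"

definition avoids_until_last :: "'a set \<Rightarrow> 'a set list \<Rightarrow> bool" where
  "avoids_until_last X P \<longleftrightarrow> (\<forall>i. Suc i < length P \<longrightarrow> P!i \<inter> X = {})"

lemma nonrevisitingD:
  "nonrevisiting P \<Longrightarrow> i \<le> j \<Longrightarrow> j \<le> k \<Longrightarrow> k < length P \<Longrightarrow> y \<in> P!i \<Longrightarrow> y \<in> P!k \<Longrightarrow> y \<in> P!j"
  unfolding nonrevisiting_def by blast

lemma persistentD:
  "persistent W P \<Longrightarrow> y \<in> W \<Longrightarrow> i \<le> j \<Longrightarrow> j < length P \<Longrightarrow> y \<in> P!i \<Longrightarrow> y \<in> P!j"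
  unfolding persistent_def by blast

lemma persistent_last:
  assumes "persistent W P" "y \<in> W" "i < length P" "y \<in> P!i"
  shows "y \<in> last P"
proof -
  have "P \<noteq> []" using assms(3) by auto
  then show ?thesis using persistentD[OF assms(1,2), of i "length P - 1"] assms(3,4)
    by (simp add: last_conv_nth)
qed

lemma avoids_until_last_index:
  assumes "avoids_until_last X P" "i < length P" "y \<in> P!i" "y \<in> X"
  shows "Suc i = length P"
proof (rule ccontr)
  assume "Suc i \<noteq> length P"
  then have "Suc i < length P" using assms(2) by simp
  then show False using assms unfolding avoids_until_last_def by blast
qed

lemma nonrevisiting_singleton: "nonrevisiting [A]"
  unfolding nonrevisiting_def by simp

lemma nonrevisiting_doubleton: "nonrevisiting [A, B]"
  unfolding nonrevisiting_def by (auto simp: less_Suc_eq nth_Cons')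

lemma persistent_singleton: "persistent W [A]"
  unfolding persistent_def by simp

lemma persistent_doubleton: "W \<inter> A \<subseteq> B \<Longrightarrow> persistent W [A, B]"
  unfolding persistent_def by (auto simp: less_Suc_eq nth_Cons')

text \<open>Paths with \<open>last P1 = hd P2\<close> are glued to \<open>P1 @ tl P2\<close>; index \<open>length P1 - 1\<close> is the
  junction and belongs to both halves.\<close>

lemma nth_glue_left:
  assumes "P1 \<noteq> []" "i \<le> length P1 - 1"
  shows "(P1 @ tl P2) ! i = P1 ! i"
proof -
  have "i < length P1" using assms by (cases P1) auto
  then show ?thesis by (simp add: nth_append)
qed

lemma nth_glue_right:
  assumes "P1 \<noteq> []" "P2 \<noteq> []" "last P1 = hd P2" "length P1 - 1 \<le> i" "i < length (P1 @ tl P2)"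
  shows "(P1 @ tl P2) ! i = P2 ! (i - (length P1 - 1))"
proof (cases "i = length P1 - 1")
  case True
  then show ?thesis using assms by (simp add: nth_append last_conv_nth hd_conv_nth)
next
  case False
  then show ?thesis using assms by (cases P2) (auto simp: nth_append nth_Cons' split: if_splits)
qed

lemma length_glue:
  "P1 \<noteq> [] \<Longrightarrow> P2 \<noteq> [] \<Longrightarrow> length (P1 @ tl P2) = length P1 - 1 + length P2"
  by (cases P2) auto

lemma last_glue: "P1 \<noteq> [] \<Longrightarrow> P2 \<noteq> [] \<Longrightarrow> last P1 = hd P2 \<Longrightarrow> last (P1 @ tl P2) = last P2"
  by (cases P2) auto

lemma glue_indices:
  assumes "P1 \<noteq> []" "P2 \<noteq> []" "last P1 = hd P2"
  shows "length P1 = Suc (length P1 - 1)"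
    and "length (P1 @ tl P2) = length P1 - 1 + length P2"
    and "i \<le> length P1 - 1 \<Longrightarrow> (P1 @ tl P2)!i = P1!i"
    and "length P1 - 1 \<le> i \<Longrightarrow> i < length P1 - 1 + length P2 \<Longrightarrow>
      (P1 @ tl P2)!i = P2!(i - (length P1 - 1))"
proof -
  show "length P1 = Suc (length P1 - 1)" using assms(1) by simp
  show len: "length (P1 @ tl P2) = length P1 - 1 + length P2" using length_glue[OF assms(1,2)] .
  show "i \<le> length P1 - 1 \<Longrightarrow> (P1 @ tl P2)!i = P1!i" using nth_glue_left[OF assms(1)] .
  show "length P1 - 1 \<le> i \<Longrightarrow> i < length P1 - 1 + length P2 \<Longrightarrow>
      (P1 @ tl P2)!i = P2!(i - (length P1 - 1))"
    using nth_glue_right[OF assms, of i] unfolding len by blast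
qed

lemma nonrevisiting_glue:
  assumes ne: "P1 \<noteq> []" "P2 \<noteq> []" and junction: "last P1 = hd P2"
    and P1: "nonrevisiting P1" and P2: "nonrevisiting P2"
    and bridge: "\<And>y i k. i < length P1 \<Longrightarrow> y \<in> P1!i \<Longrightarrow> k < length P2 \<Longrightarrow> y \<in> P2!k \<Longrightarrow> y \<in> last P1"
  shows "nonrevisiting (P1 @ tl P2)"
proof -
  define Q b where "Q = P1 @ tl P2" and "b = length P1 - 1"
  note glue = glue_indices[OF ne junction, folded Q_def b_def]
  note lenP1 = glue(1) and lenQ = glue(2) and QL = glue(3) and QR = glue(4)
  have left: "y \<in> Q!j" if "i \<le> j" "j \<le> k" "k \<le> b" "y \<in> Q!i" "y \<in> Q!k" for y i j k
    using that nonrevisitingD[OF P1, of i j k y] QL lenP1 by simp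
  have right: "y \<in> Q!j"
    if "b \<le> i" "i \<le> j" "j \<le> k" "k < length Q" "y \<in> Q!i" "y \<in> Q!k" for y i j k
    using that nonrevisitingD[OF P2, of "i - b" "j - b" "k - b" y] QR lenQ by simp
  have across: "y \<in> Q!b" if "i \<le> b" "b \<le> k" "k < length Q" "y \<in> Q!i" "y \<in> Q!k" for y i k
    using that bridge[of i y "k - b"] QL QR lenQ lenP1 ne by (simp add: last_conv_nth)
  show ?thesis
    unfolding nonrevisiting_def Q_def[symmetric]
  proof (intro allI impI)
    fix y i j k assume ijk: "i \<le> j" "j \<le> k" "k < length Q" "y \<in> Q!i" "y \<in> Q!k"
    consider "k \<le> b" | "b \<le> i" | "i \<le> b" "b \<le> k" by linarith
    then show "y \<in> Q!j"
    proof cases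
      case 3
      then have "y \<in> Q!b" using across ijk by blast
      then show ?thesis using left[of i j b y] right[of b j k y] ijk 3 by (cases "j \<le> b") auto
    qed (use left right ijk in blast)+
  qed
qed

lemma persistent_glue:
  assumes ne: "P1 \<noteq> []" "P2 \<noteq> []" and junction: "last P1 = hd P2"
    and P1: "persistent W P1" and P2: "persistent W P2"
  shows "persistent W (P1 @ tl P2)"
proof -
  define Q b where "Q = P1 @ tl P2" and "b = length P1 - 1"
  note glue = glue_indices[OF ne junction, folded Q_def b_def]
  note lenP1 = glue(1) and lenQ = glue(2) and QL = glue(3) and QR = glue(4)
  have left: "y \<in> Q!j" if "y \<in> W" "i \<le> j" "j \<le> b" "y \<in> Q!i" for y i j
    using that persistentD[OF P1, of y i j] QL lenP1 by simp
  have right: "y \<in> Q!j" if "y \<in> W" "b \<le> i" "i \<le> j" "j < length Q" "y \<in> Q!i" for y i j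
    using that persistentD[OF P2, of y "i - b" "j - b"] QR lenQ by simp
  show ?thesis
    unfolding persistent_def Q_def[symmetric]
  proof (intro ballI allI impI)
    fix y i j assume y: "y \<in> W" "i \<le> j" "j < length Q" "y \<in> Q!i"
    consider "j \<le> b" | "b \<le> i" | "i \<le> b" "b \<le> j" by linarith
    then show "y \<in> Q!j"
    proof cases
      case 3
      then show ?thesis using left[of y i b] right[of y b j] y by blast
    qed (use left right y in blast)+
  qed
qed

lemma facet_path_glue:
  assumes P1: "facet_path K P1" and P2: "facet_path K P2" and junction: "last P1 = hd P2"
  shows "facet_path K (P1 @ tl P2)"
proof -
  have ne: "P1 \<noteq> []" "P2 \<noteq> []" using P1 P2 unfolding facet_path_def by auto
  define Q b where "Q = P1 @ tl P2" and "b = length P1 - 1"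
  note glue = glue_indices[OF ne junction, folded Q_def b_def]
  note lenP1 = glue(1) and lenQ = glue(2) and QL = glue(3) and QR = glue(4)
  have "set Q \<subseteq> set P1 \<union> set P2" using ne by (auto simp: Q_def dest: list.set_sel(2))
  moreover have "ridge_adj (Q!i) (Q!Suc i)" if "Suc i < length Q" for i
  proof (cases "i < b")
    case True
    then show ?thesis using P1 QL[of i] QL[of "Suc i"] ne unfolding facet_path_def b_def by simp
  next
    case False
    then show ?thesis using P2 QR[of i] QR[of "Suc i"] that lenQ unfolding facet_path_def
      by (simp add: Suc_diff_le)
  qed
  ultimately show ?thesis using P1 P2 unfolding facet_path_def Q_def by auto
qed

lemma nonrevisiting_abandons_vertex:
  assumes P: "facet_path K P" "nonrevisiting P" and i: "Suc i < length P"
  shows "\<exists>y\<in>P!i. \<forall>j. i < j \<longrightarrow> j < length P \<longrightarrow> y \<notin> P!j"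
proof -
  have "ridge_adj (P!i) (P!Suc i)" using P(1) i unfolding facet_path_def by simp
  then have "P!i \<inter> P!Suc i \<noteq> P!i" unfolding ridge_adj_def by auto
  then obtain y where y: "y \<in> P!i" "y \<notin> P!Suc i" by blast
  have "y \<notin> P!j" if "i < j" "j < length P" for j
    using nonrevisitingD[OF P(2), of i "Suc i" j y] y that by auto
  then show ?thesis using y(1) by blast
qed

lemma avoids_until_last_glue:
  assumes ne: "P1 \<noteq> []" "P2 \<noteq> []" and junction: "last P1 = hd P2"
    and P1: "avoids_until_last X P1" and P2: "avoids_until_last X P2"
  shows "avoids_until_last X (P1 @ tl P2)"
  unfolding avoids_until_last_def
proof (intro allI impI)
  fix i assume i: "Suc i < length (P1 @ tl P2)"
  show "(P1 @ tl P2) ! i \<inter> X = {}"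
  proof (cases "Suc i < length P1")
    case True
    then have "(P1 @ tl P2) ! i = P1 ! i" by (simp add: nth_append)
    then show ?thesis using P1 True unfolding avoids_until_last_def by simp
  next
    case False
    then have b: "length P1 - 1 \<le> i" by simp
    have "(P1 @ tl P2) ! i = P2 ! (i - (length P1 - 1))"
      using nth_glue_right[OF ne junction b] i by simp
    moreover have "Suc (i - (length P1 - 1)) < length P2"
      using i b unfolding length_glue[OF ne] by linarith
    ultimately show ?thesis using P2 unfolding avoids_until_last_def by presburger
  qed
qed

lemma last_if_propagates:
  assumes "xs \<noteq> []" "Q (hd xs)" "\<And>i. Suc i < length xs \<Longrightarrow> Q (xs!i) \<Longrightarrow> Q (xs!Suc i)"
  shows "Q (last xs)"
proof -
  have "i < length xs \<longrightarrow> Q (xs!i)" for i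
    using assms by (induction i) (auto simp: hd_conv_nth)
  then show ?thesis using assms(1) by (simp add: last_conv_nth)
qed

lemma face_in_facet_finite:
  assumes "finite C" "\<sigma> \<in> C"
  obtains F where "F \<in> facets C" "\<sigma> \<subseteq> F"
proof -
  obtain F where F: "F \<in> {\<tau>\<in>C. \<sigma> \<subseteq> \<tau>}" "\<forall>\<tau>\<in>{\<tau>\<in>C. \<sigma> \<subseteq> \<tau>}. F \<le> \<tau> \<longrightarrow> F = \<tau>"
    using finite_has_maximal[of "{\<tau>\<in>C. \<sigma> \<subseteq> \<tau>}"] assms by auto
  then have "F \<in> facets C" unfolding facets_def by auto
  then show thesis using that F by blast
qed

section \<open>Normal flag complexes\<close>

locale normal_flag_complex =
  fixes C :: "'a set set" and d :: nat
  assumes simplicial: "simplicial_complex C" and finite_complex: "finite C"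
    and card_facet: "\<And>F. F \<in> facets C \<Longrightarrow> card F = Suc d"
    and card_face_le: "\<And>\<sigma>. \<sigma> \<in> C \<Longrightarrow> card \<sigma> \<le> Suc d"
    and star_connected: "\<And>\<sigma>. \<sigma> \<in> C \<Longrightarrow> dual_connected (St \<sigma> C)"
    and flag: "flag C"
begin

lemma finite_face: "\<sigma> \<in> C \<Longrightarrow> finite \<sigma>"
  using simplicial unfolding simplicial_complex_def by blast

lemma face_subset: "\<sigma> \<in> C \<Longrightarrow> \<tau> \<subseteq> \<sigma> \<Longrightarrow> \<tau> \<in> C"
  using simplicial unfolding simplicial_complex_def by blast

lemma facet_is_face: "F \<in> facets C \<Longrightarrow> F \<in> C"
  unfolding facets_def by blast

lemma facet_maximal: "F \<in> facets C \<Longrightarrow> \<tau> \<in> C \<Longrightarrow> F \<subseteq> \<tau> \<Longrightarrow> \<tau> = F"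
  unfolding facets_def by blast

lemma finite_vertices: "finite (vertices C)"
  unfolding vertices_def using finite_complex finite_face by blast

lemma face_in_vertices: "\<sigma> \<in> C \<Longrightarrow> \<sigma> \<subseteq> vertices C"
  unfolding vertices_def by blast

lemma face_in_facet:
  assumes "\<sigma> \<in> C" obtains F where "F \<in> facets C" "\<sigma> \<subseteq> F"
  using face_in_facet_finite[OF finite_complex assms] .

lemma facet_if_card:
  assumes "\<sigma> \<in> C" "card \<sigma> = Suc d"
  shows "\<sigma> \<in> facets C"
proof -
  have "\<tau> = \<sigma>" if "\<tau> \<in> C" "\<sigma> \<subseteq> \<tau>" for \<tau>
    using that assms card_face_le[of \<tau>] card_mono[OF finite_face, of \<tau> \<sigma>]
      card_subset_eq[OF finite_face] by (metis le_antisym)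
  then show ?thesis using assms(1) unfolding facets_def by blast
qed

lemma facets_St_iff [simp]:
  assumes "\<alpha> \<in> C"
  shows "F \<in> facets (St \<alpha> C) \<longleftrightarrow> F \<in> facets C \<and> \<alpha> \<subseteq> F"
proof
  assume F: "F \<in> facets (St \<alpha> C)"
  then have F_max: "\<And>\<tau>. \<tau> \<in> St \<alpha> C \<Longrightarrow> F \<subseteq> \<tau> \<Longrightarrow> \<tau> = F" and "F \<in> St \<alpha> C"
    unfolding facets_def by simp_all
  then obtain \<rho> where \<rho>: "\<rho> \<in> C" "\<alpha> \<subseteq> \<rho>" "F \<subseteq> \<rho>" unfolding St_def by blast
  obtain G where G: "G \<in> facets C" "\<rho> \<subseteq> G" by (rule face_in_facet[OF \<rho>(1)])
  have "G \<in> St \<alpha> C" unfolding St_def using G(2) \<rho>(2) facet_is_face[OF G(1)] by auto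
  then have "G = F" using F_max[of G] \<rho>(3) G(2) by simp
  then show "F \<in> facets C \<and> \<alpha> \<subseteq> F" using G \<rho> by simp
next
  assume F: "F \<in> facets C \<and> \<alpha> \<subseteq> F"
  then have "F \<in> C" using facet_is_face by blast
  then have "F \<in> St \<alpha> C" unfolding St_def using F by blast
  moreover have "\<tau> = F" if "\<tau> \<in> St \<alpha> C" "F \<subseteq> \<tau>" for \<tau>
  proof -
    have "\<tau> \<in> C" using that(1) unfolding St_def by simp
    then show ?thesis using facet_maximal F that(2) by blast
  qed
  ultimately show "F \<in> facets (St \<alpha> C)" unfolding facets_def by blast
qed

lemma facet_path_St_nth:
  "\<alpha> \<in> C \<Longrightarrow> facet_path (St \<alpha> C) P \<Longrightarrow> i < length P \<Longrightarrow> P!i \<in> facets C \<and> \<alpha> \<subseteq> P!i"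
  unfolding facet_path_def using nth_mem by fastforce

lemma facet_path_St_mono:
  "\<alpha> \<in> C \<Longrightarrow> \<alpha>' \<in> C \<Longrightarrow> \<alpha> \<subseteq> \<alpha>' \<Longrightarrow> facet_path (St \<alpha>' C) P \<Longrightarrow> facet_path (St \<alpha> C) P"
  unfolding facet_path_def subset_iff by auto

lemma facet_path_St_singleton:
  "\<alpha> \<in> C \<Longrightarrow> F \<in> facets C \<Longrightarrow> \<alpha> \<subseteq> F \<Longrightarrow> facet_path (St \<alpha> C) [F]"
  unfolding facet_path_def by simp

definition adjacent :: "'a \<Rightarrow> 'a \<Rightarrow> bool" where
  "adjacent u w \<longleftrightarrow> u \<noteq> w \<and> {u, w} \<in> C"

definition closed_nbhd :: "'a set \<Rightarrow> 'a set" where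
  "closed_nbhd T = T \<union> {y. \<exists>t\<in>T. adjacent y t}"

lemma closed_nbhd_mono: "T \<subseteq> T' \<Longrightarrow> closed_nbhd T \<subseteq> closed_nbhd T'"
  unfolding closed_nbhd_def by blast

lemma adjacent_sym: "adjacent u w \<Longrightarrow> adjacent w u"
  unfolding adjacent_def by (auto simp: insert_commute)

lemma adjacent_if_in_face: "\<sigma> \<in> C \<Longrightarrow> u \<in> \<sigma> \<Longrightarrow> w \<in> \<sigma> \<Longrightarrow> u \<noteq> w \<Longrightarrow> adjacent u w"
  unfolding adjacent_def using face_subset[of \<sigma> "{u, w}"] by simp

lemma clique_is_face:
  "finite S \<Longrightarrow> S \<subseteq> vertices C \<Longrightarrow> (\<And>u w. u \<in> S \<Longrightarrow> w \<in> S \<Longrightarrow> u \<noteq> w \<Longrightarrow> adjacent u w) \<Longrightarrow> S \<in> C"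
proof (induction "card S" arbitrary: S rule: less_induct)
  case less
  show ?case
  proof (rule ccontr)
    assume S: "S \<notin> C"
    have "T \<in> C" if "T \<subset> S" for T
      using that less by (meson finite_subset order.trans psubset_card_mono psubset_imp_subset subsetD)
    then have "card S = 2" using flag S less.prems(2) unfolding flag_def by blast
    then obtain u w where "S = {u, w}" "u \<noteq> w" unfolding card_2_iff by blast
    then show False using S less.prems(3)[of u w] unfolding adjacent_def by simp
  qed
qed

lemma insert_face_iff_adjacent:
  assumes "\<sigma> \<in> C" "x \<in> vertices C" "x \<notin> \<sigma>"
  shows "insert x \<sigma> \<in> C \<longleftrightarrow> (\<forall>u\<in>\<sigma>. adjacent x u)"
proof
  show "insert x \<sigma> \<in> C \<Longrightarrow> \<forall>u\<in>\<sigma>. adjacent x u"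
    using adjacent_if_in_face assms(3) by blast
  assume "\<forall>u\<in>\<sigma>. adjacent x u"
  then show "insert x \<sigma> \<in> C"
    using assms face_in_vertices[OF assms(1)] finite_face[OF assms(1)]
    by (intro clique_is_face) (auto intro: adjacent_sym adjacent_if_in_face)
qed

lemma facet_no_common_neighbour:
  assumes F: "F \<in> facets C" "x \<notin> F"
  shows "\<not> (\<forall>u\<in>F. adjacent x u)"
proof
  assume adj: "\<forall>u\<in>F. adjacent x u"
  have "F \<noteq> {}" using card_facet[OF F(1)] by auto
  then obtain u where "u \<in> F" by blast
  then have "{x, u} \<in> C" using adj unfolding adjacent_def by blast
  then have "x \<in> vertices C" using face_in_vertices by blast
  then have "insert x F \<in> C" using insert_face_iff_adjacent[OF facet_is_face[OF F(1)] _ F(2)] adj by blast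
  then show False using facet_maximal[OF F(1)] F(2) by blast
qed

section \<open>Layering the link of a face\<close>

definition link_vertices :: "'a set \<Rightarrow> 'a set" where
  "link_vertices \<alpha> = {w. w \<notin> \<alpha> \<and> insert w \<alpha> \<in> C}"

lemma link_vertices_if_in_face: "H \<in> C \<Longrightarrow> \<alpha> \<subseteq> H \<Longrightarrow> w \<in> H - \<alpha> \<Longrightarrow> w \<in> link_vertices \<alpha>"
  unfolding link_vertices_def using face_subset by auto

lemma link_vertices_extend:
  assumes x: "x \<in> link_vertices \<alpha>" and \<beta>: "\<beta> \<in> C" "\<alpha> \<subseteq> \<beta>" "x \<notin> \<beta>"
    and adj: "\<forall>u\<in>\<beta> - \<alpha>. adjacent x u"
  shows "x \<in> link_vertices \<beta>"
proof -
  have x\<alpha>: "insert x \<alpha> \<in> C" "x \<notin> \<alpha>" using x unfolding link_vertices_def by simp_all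
  have "adjacent x u" if "u \<in> \<beta>" for u
  proof (cases "u \<in> \<alpha>")
    case True
    then show ?thesis using adjacent_if_in_face[OF x\<alpha>(1), of x u] x\<alpha>(2) by auto
  qed (use adj that in blast)
  moreover have "x \<in> vertices C" using face_in_vertices[OF x\<alpha>(1)] by blast
  ultimately have "insert x \<beta> \<in> C" using insert_face_iff_adjacent[OF \<beta>(1) _ \<beta>(3)] by blast
  then show ?thesis using \<beta>(3) unfolding link_vertices_def by simp
qed

fun reach :: "'a set \<Rightarrow> 'a set \<Rightarrow> nat \<Rightarrow> 'a set" where
  "reach V X 0 = X"
| "reach V X (Suc k) = reach V X k \<union> {w\<in>V. \<exists>u\<in>reach V X k. adjacent u w}"

definition level :: "'a set \<Rightarrow> 'a set \<Rightarrow> 'a \<Rightarrow> nat" where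
  "level V X w = (LEAST k. w \<in> reach V X k)"

definition layering :: "'a set \<Rightarrow> 'a set \<Rightarrow> ('a \<Rightarrow> nat) \<Rightarrow> bool" where
  "layering V X lv \<longleftrightarrow> (\<forall>w\<in>V. lv w = 0 \<longleftrightarrow> w \<in> X)
     \<and> (\<forall>u\<in>V. \<forall>w\<in>V. adjacent u w \<longrightarrow> lv w \<le> Suc (lv u))
     \<and> (\<forall>w\<in>V. \<forall>m. lv w = Suc m \<longrightarrow> (\<exists>u\<in>V. lv u = m \<and> adjacent u w))"

lemma reach_subset: "X \<subseteq> V \<Longrightarrow> reach V X k \<subseteq> V"
  by (induction k) auto

lemma reach_level: "w \<in> reach V X k \<Longrightarrow> w \<in> reach V X (level V X w) \<and> level V X w \<le> k"
  unfolding level_def by (meson LeastI Least_le)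

lemma layering_level:
  assumes XV: "X \<subseteq> V" and reachable: "\<And>w. w \<in> V \<Longrightarrow> \<exists>k. w \<in> reach V X k"
  shows "layering V X (level V X)"
  unfolding layering_def
proof (intro conjI ballI allI impI)
  fix w assume "w \<in> V"
  then show "level V X w = 0 \<longleftrightarrow> w \<in> X"
    using reachable reach_level[of w V X] reach_level[of w V X 0] by fastforce
next
  fix u w assume "u \<in> V" "w \<in> V" "adjacent u w"
  then have "w \<in> reach V X (Suc (level V X u))"
    using reachable reach_level[of u V X] by fastforce
  then show "level V X w \<le> Suc (level V X u)" using reach_level by blast
next
  fix w m assume w: "w \<in> V" "level V X w = Suc m"
  then have "w \<in> reach V X (Suc m)" "w \<notin> reach V X m"
    using reachable reach_level[of w V X] by (fastforce, fastforce)
  then obtain u where u: "u \<in> reach V X m" "adjacent u w" by auto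
  have "level V X u \<le> m" "Suc m \<le> Suc (level V X u)"
    using reach_level[OF u(1)] reach_level[of w V X "Suc (level V X u)"] u w by auto
  then show "\<exists>u\<in>V. level V X u = m \<and> adjacent u w"
    using u reach_subset[OF XV] by (intro bexI[of _ u]) auto
qed

text \<open>In codimension at least two, adjacent facets of the star of \<open>\<alpha>\<close> share a vertex outside
  \<open>\<alpha>\<close>, so connectivity of the dual graph of the star passes to the graph of the link.\<close>

lemma ridge_outside_face:
  assumes \<alpha>: "\<alpha> \<in> C" "card \<alpha> + 2 \<le> Suc d" and H: "H \<in> facets C" "H' \<in> facets C"
    and "ridge_adj H H'"
  shows "\<exists>u\<in>H \<inter> H'. u \<notin> \<alpha>"
proof -
  have "card (H \<inter> H') = d" using assms(5) card_facet[OF H(1)] unfolding ridge_adj_def by simp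
  then have "\<not> H \<inter> H' \<subseteq> \<alpha>" using \<alpha> card_mono[OF finite_face[OF \<alpha>(1)], of "H \<inter> H'"] by linarith
  then show ?thesis by blast
qed

lemma link_reachable:
  assumes \<alpha>: "\<alpha> \<in> C" "card \<alpha> + 2 \<le> Suc d" and X: "X \<subseteq> link_vertices \<alpha>" "x \<in> X"
    and w: "w \<in> link_vertices \<alpha>"
  shows "\<exists>k. w \<in> reach (link_vertices \<alpha>) X k"
proof -
  define R where "R = {w. \<exists>k. w \<in> reach (link_vertices \<alpha>) X k}"
  have spread: "H - \<alpha> \<subseteq> R" if H: "H \<in> facets C" "\<alpha> \<subseteq> H" "u \<in> H - \<alpha>" "u \<in> R" for H u
  proof
    fix v assume v: "v \<in> H - \<alpha>"
    obtain k where "u \<in> reach (link_vertices \<alpha>) X k" using H R_def by blast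
    moreover have "v \<in> link_vertices \<alpha>" using link_vertices_if_in_face H v facet_is_face by blast
    moreover have "u = v \<or> adjacent u v" using adjacent_if_in_face facet_is_face H v by blast
    ultimately have "v \<in> reach (link_vertices \<alpha>) X (Suc k)" by auto
    then show "v \<in> R" unfolding R_def by blast
  qed
  obtain F0 where F0: "F0 \<in> facets C" "insert x \<alpha> \<subseteq> F0"
    using face_in_facet X unfolding link_vertices_def by blast
  obtain Fw where Fw: "Fw \<in> facets C" "insert w \<alpha> \<subseteq> Fw"
    using face_in_facet w unfolding link_vertices_def by blast
  have "F0 \<in> facets (St \<alpha> C)" "Fw \<in> facets (St \<alpha> C)" using F0 Fw \<alpha>(1) by auto
  then obtain xs where xs: "facet_path (St \<alpha> C) xs" "hd xs = F0" "last xs = Fw"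
    using star_connected[OF \<alpha>(1)] unfolding dual_connected_def path_between_def by blast
  have "Fw - \<alpha> \<subseteq> R"
    unfolding xs(3)[symmetric]
  proof (rule last_if_propagates)
    show "xs \<noteq> []" using xs(1) unfolding facet_path_def by simp
    have "x \<in> R" "x \<notin> \<alpha>" using X unfolding R_def link_vertices_def
      by (auto intro: exI[of _ 0])
    then show "hd xs - \<alpha> \<subseteq> R" using spread F0 xs(2) by auto
  next
    fix i assume i: "Suc i < length xs" and IH: "xs!i - \<alpha> \<subseteq> R"
    have H: "xs!i \<in> facets C" "\<alpha> \<subseteq> xs!i" "xs!Suc i \<in> facets C" "\<alpha> \<subseteq> xs!Suc i"
      using facet_path_St_nth[OF \<alpha>(1) xs(1)] i by auto
    have "ridge_adj (xs!i) (xs!Suc i)" using xs(1) i unfolding facet_path_def by blast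
    then obtain u where "u \<in> xs!i" "u \<in> xs!Suc i" "u \<notin> \<alpha>"
      using ridge_outside_face[OF \<alpha> H(1,3)] by blast
    then show "xs!Suc i - \<alpha> \<subseteq> R" using spread H IH by blast
  qed
  then show ?thesis using Fw w unfolding R_def link_vertices_def by auto
qed

lemma link_layering:
  assumes "\<alpha> \<in> C" "card \<alpha> + 2 \<le> Suc d" "X \<subseteq> link_vertices \<alpha>" "X \<noteq> {}"
  shows "layering (link_vertices \<alpha>) X (level (link_vertices \<alpha>) X)"
proof -
  obtain x where "x \<in> X" using assms(4) by blast
  then show ?thesis using assms link_reachable[OF assms(1-3)] by (intro layering_level) auto
qed

section \<open>Paths that first hit a set of link vertices\<close>

definition first_hit_path :: "'a set \<Rightarrow> 'a set \<Rightarrow> 'a set list \<Rightarrow> bool" where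
  "first_hit_path \<alpha> X P \<longleftrightarrow> facet_path (St \<alpha> C) P \<and> last P \<inter> X \<noteq> {} \<and> avoids_until_last X P
     \<and> nonrevisiting P \<and> persistent (closed_nbhd (last P \<inter> X)) P"

lemma first_hit_path_singleton:
  "\<alpha> \<in> C \<Longrightarrow> F \<in> facets C \<Longrightarrow> \<alpha> \<subseteq> F \<Longrightarrow> F \<inter> X \<noteq> {} \<Longrightarrow> first_hit_path \<alpha> X [F]"
  unfolding first_hit_path_def avoids_until_last_def
  using facet_path_St_singleton nonrevisiting_singleton persistent_singleton by auto

text \<open>The inductive step of the key lemma: \<open>lv\<close> layers the graph of the link by distance from
  \<open>X\<close>, and the lemma is already known for all larger faces.\<close>

context
  fixes \<alpha> X :: "'a set" and lv :: "'a \<Rightarrow> nat"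
  assumes face: "\<alpha> \<in> C" and X_link: "X \<subseteq> link_vertices \<alpha>"
    and layers: "layering (link_vertices \<alpha>) X lv"
    and larger_faces: "\<And>\<alpha>' X' F'. \<alpha>' \<in> C \<Longrightarrow> card \<alpha> < card \<alpha>' \<Longrightarrow> X' \<subseteq> link_vertices \<alpha>' \<Longrightarrow>
      X' \<noteq> {} \<Longrightarrow> F' \<in> facets C \<Longrightarrow> \<alpha>' \<subseteq> F' \<Longrightarrow> \<exists>P. first_hit_path \<alpha>' X' P \<and> hd P = F'"
begin

lemma level_zero_iff: "w \<in> link_vertices \<alpha> \<Longrightarrow> lv w = 0 \<longleftrightarrow> w \<in> X"
  using layers unfolding layering_def by blast

lemma level_adjacent:
  "u \<in> link_vertices \<alpha> \<Longrightarrow> w \<in> link_vertices \<alpha> \<Longrightarrow> adjacent u w \<Longrightarrow> lv w \<le> Suc (lv u)"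
  using layers unfolding layering_def by blast

lemma level_pred:
  "w \<in> link_vertices \<alpha> \<Longrightarrow> lv w = Suc m \<Longrightarrow> \<exists>u\<in>link_vertices \<alpha>. lv u = m \<and> adjacent u w"
  using layers unfolding layering_def by blast

lemma level_closed_nbhd_X:
  assumes "y \<in> link_vertices \<alpha>" "y \<in> closed_nbhd (T \<inter> X)"
  shows "lv y \<le> 1"
proof -
  consider "y \<in> X" | t where "t \<in> X" "adjacent t y"
    using assms(2) adjacent_sym unfolding closed_nbhd_def by blast
  then show ?thesis
  proof cases
    case 1
    then show ?thesis using level_zero_iff[OF assms(1)] by simp
  next
    case 2
    then have "t \<in> link_vertices \<alpha>" "lv t = 0" using X_link level_zero_iff by auto
    then show ?thesis using level_adjacent assms(1) 2(2) by fastforce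
  qed
qed

lemma facet_vertex_in_link: "H \<in> facets C \<Longrightarrow> \<alpha> \<subseteq> H \<Longrightarrow> y \<in> H - \<alpha> \<Longrightarrow> y \<in> link_vertices \<alpha>"
  using link_vertices_if_in_face facet_is_face by blast

text \<open>The invariant of the induction on levels; it is what makes the concatenation in the
  inductive step non-revisiting.\<close>

definition anchored :: "nat \<Rightarrow> 'a set \<Rightarrow> 'a set list \<Rightarrow> bool" where
  "anchored m S P \<longleftrightarrow> (\<forall>i<length P. \<forall>y\<in>P!i - \<alpha>.
     lv y \<le> Suc m \<and> (lv y = Suc m \<longrightarrow> (\<exists>t\<in>S - \<alpha>. lv t = m \<and> adjacent t y)))"

definition descent :: "nat \<Rightarrow> 'a \<Rightarrow> 'a set list \<Rightarrow> bool" where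
  "descent m z P \<longleftrightarrow> facet_path (St \<alpha> C) P \<and> nonrevisiting P \<and> (\<forall>H\<in>set P. z \<in> H)
     \<and> (\<forall>i<length P. \<forall>y\<in>P!i - \<alpha>. lv y = m \<longrightarrow> Suc i = length P)
     \<and> (\<exists>y\<in>last P - \<alpha>. lv y = m)
     \<and> persistent (closed_nbhd {y\<in>last P - \<alpha>. lv y = m}) P"

lemma first_hit_path_level_zero:
  assumes S: "S \<in> facets C" "\<alpha> \<subseteq> S" and y0: "y0 \<in> S - \<alpha>" "lv y0 = 0"
  shows "first_hit_path \<alpha> X [S] \<and> anchored 0 S [S]"
proof
  have y0_link: "y0 \<in> link_vertices \<alpha>" using facet_vertex_in_link S y0 by blast
  then show "first_hit_path \<alpha> X [S]"
    using first_hit_path_singleton[OF face S] level_zero_iff y0 by blast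
  have "lv y \<le> 1" "lv y = 1 \<Longrightarrow> adjacent y0 y" if "y \<in> S - \<alpha>" for y
    using that y0 y0_link facet_vertex_in_link[OF S] level_adjacent
      adjacent_if_in_face[OF facet_is_face[OF S(1)], of y0 y] by force+
  then show "anchored 0 S [S]" unfolding anchored_def using y0 by fastforce
qed

lemma below_new_vertices_in_link:
  assumes "\<alpha> \<subseteq> \<alpha>'" "\<forall>u\<in>\<alpha>' - \<alpha>. Suc m \<le> lv u" "H \<in> C" "\<alpha>' \<subseteq> H" "y \<in> H - \<alpha>" "lv y \<le> m"
  shows "y \<in> link_vertices \<alpha>'"
proof -
  have "y \<notin> \<alpha>' - \<alpha>"
  proof
    assume "y \<in> \<alpha>' - \<alpha>"
    then have "Suc m \<le> lv y" using assms(2) by blast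
    then show False using assms(6) by simp
  qed
  then show ?thesis using link_vertices_if_in_face[OF assms(3,4)] assms(5) by blast
qed

lemma first_hit_path_descent:
  assumes \<alpha>': "\<alpha>' \<in> C" "\<alpha> \<subseteq> \<alpha>'" "z \<in> \<alpha>'" and above: "\<forall>u\<in>\<alpha>' - \<alpha>. Suc m \<le> lv u"
    and P: "first_hit_path \<alpha>' {w \<in> link_vertices \<alpha>'. lv w = m} P"
  shows "descent m z P"
proof -
  define X' where "X' = {w \<in> link_vertices \<alpha>'. lv w = m}"
  have P_facets: "P!i \<in> facets C \<and> \<alpha>' \<subseteq> P!i" if "i < length P" for i
    using facet_path_St_nth[OF \<alpha>'(1) _ that] P unfolding first_hit_path_def by blast
  have level_m: "y \<in> X'" if "i < length P" "y \<in> P!i - \<alpha>" "lv y = m" for i y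
    using below_new_vertices_in_link[OF \<alpha>'(2) above _ _ that(2)] P_facets[OF that(1)] that(3)
      facet_is_face unfolding X'_def by blast
  have ne: "P \<noteq> []" using P unfolding first_hit_path_def facet_path_def by simp
  then have last_P: "last P = P!(length P - 1)" "length P - 1 < length P" by (auto simp: last_conv_nth)
  have X'_outside: "y \<notin> \<alpha>" if "y \<in> X'" for y
    using that \<alpha>'(2) unfolding X'_def link_vertices_def by blast
  have kept: "{y\<in>last P - \<alpha>. lv y = m} = last P \<inter> X'"
  proof
    show "{y\<in>last P - \<alpha>. lv y = m} \<subseteq> last P \<inter> X'"
      using level_m[OF last_P(2)] unfolding last_P(1) by blast
    show "last P \<inter> X' \<subseteq> {y\<in>last P - \<alpha>. lv y = m}"
    proof
      fix y assume "y \<in> last P \<inter> X'"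
      then show "y \<in> {y\<in>last P - \<alpha>. lv y = m}" using X'_outside[of y] unfolding X'_def by simp
    qed
  qed
  note P = P[folded X'_def]
  show "descent m z P"
    unfolding descent_def
  proof (intro conjI ballI allI impI)
    show "facet_path (St \<alpha> C) P"
      using P facet_path_St_mono[OF face \<alpha>'(1,2)] unfolding first_hit_path_def by blast
    show "nonrevisiting P" using P unfolding first_hit_path_def by blast
    show "persistent (closed_nbhd {y\<in>last P - \<alpha>. lv y = m}) P"
      using P unfolding kept first_hit_path_def by blast
    show "\<exists>y\<in>last P - \<alpha>. lv y = m" using P kept unfolding first_hit_path_def by blast
  next
    fix H assume "H \<in> set P"
    then show "z \<in> H" using P_facets \<alpha>'(3) by (fastforce simp: in_set_conv_nth)
  next
    fix i y assume "i < length P" "y \<in> P!i - \<alpha>" "lv y = m"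
    moreover have "avoids_until_last X' P" using P unfolding first_hit_path_def by blast
    ultimately show "Suc i = length P"
      using avoids_until_last_index[of X' P i y] level_m[of i y] by blast
  qed
qed

text \<open>The descent from level \<open>m + 1\<close> to level \<open>m\<close>: enlarge \<open>\<alpha>\<close> by the vertices of \<open>S\<close>
  adjacent to a level-\<open>m\<close> neighbour \<open>x\<close> of \<open>z\<close>; by flagness \<open>x\<close> lies in the link of the
  enlarged face, and the induction hypothesis on faces provides the path.\<close>

lemma descent_exists:
  assumes S: "S \<in> facets C" "\<alpha> \<subseteq> S" "\<forall>y\<in>S - \<alpha>. Suc m \<le> lv y"
    and z: "z \<in> S - \<alpha>" "lv z = Suc m"
  shows "\<exists>P. descent m z P \<and> hd P = S"
proof -
  obtain x where x: "x \<in> link_vertices \<alpha>" "lv x = m" "adjacent x z"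
    using level_pred facet_vertex_in_link[OF S(1,2) z(1)] z(2) by blast
  have x_notin_S: "x \<notin> S"
  proof
    assume "x \<in> S"
    moreover have "x \<notin> \<alpha>" using x(1) unfolding link_vertices_def by simp
    ultimately have "Suc m \<le> lv x" using S(3) by blast
    then show False using x(2) by simp
  qed
  define \<alpha>' where "\<alpha>' = \<alpha> \<union> {u \<in> S - \<alpha>. adjacent u x}"
  have \<alpha>'S: "\<alpha>' \<subseteq> S" using S(2) unfolding \<alpha>'_def by blast
  have z_in: "z \<in> \<alpha>'" using z(1) x(3) adjacent_sym unfolding \<alpha>'_def by blast
  have \<alpha>\<alpha>': "\<alpha> \<subseteq> \<alpha>'" unfolding \<alpha>'_def by blast
  have \<alpha>'_face: "\<alpha>' \<in> C" using face_subset[OF facet_is_face[OF S(1)] \<alpha>'S] .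
  have "\<alpha> \<subset> \<alpha>'" using \<alpha>\<alpha>' z_in z(1) by blast
  then have bigger: "card \<alpha> < card \<alpha>'" using psubset_card_mono[OF finite_face[OF \<alpha>'_face]] by blast
  have "\<forall>u\<in>\<alpha>' - \<alpha>. adjacent x u" unfolding \<alpha>'_def by (auto intro: adjacent_sym)
  moreover have "x \<notin> \<alpha>'" using x_notin_S \<alpha>'S by blast
  ultimately have "x \<in> link_vertices \<alpha>'" using link_vertices_extend[OF x(1) \<alpha>'_face \<alpha>\<alpha>'] by blast
  then have "{w \<in> link_vertices \<alpha>'. lv w = m} \<noteq> {}" using x(2) by blast
  moreover have "{w \<in> link_vertices \<alpha>'. lv w = m} \<subseteq> link_vertices \<alpha>'" by blast
  ultimately obtain P where P: "first_hit_path \<alpha>' {w \<in> link_vertices \<alpha>'. lv w = m} P" "hd P = S"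
    using larger_faces[OF \<alpha>'_face bigger _ _ S(1) \<alpha>'S] by blast
  have "\<forall>u\<in>\<alpha>' - \<alpha>. Suc m \<le> lv u" using S(3) \<alpha>'S by blast
  then have "descent m z P" using first_hit_path_descent[OF \<alpha>'_face \<alpha>\<alpha>' z_in _ P(1)] by blast
  then show ?thesis using P(2) by blast
qed

lemma anchoredD:
  "anchored m S P \<Longrightarrow> i < length P \<Longrightarrow> y \<in> P!i - \<alpha> \<Longrightarrow>
    lv y \<le> Suc m \<and> (lv y = Suc m \<longrightarrow> (\<exists>t\<in>S - \<alpha>. lv t = m \<and> adjacent t y))"
  unfolding anchored_def by blast

lemma descent_level_m_last:
  "descent m z P \<Longrightarrow> i < length P \<Longrightarrow> y \<in> P!i - \<alpha> \<Longrightarrow> lv y = m \<Longrightarrow> Suc i = length P"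
  unfolding descent_def by blast

lemma descent_levels:
  assumes D: "descent m z P" and z: "z \<notin> \<alpha>" "lv z = Suc m" and y: "i < length P" "y \<in> P!i - \<alpha>"
  shows "m \<le> lv y \<and> lv y \<le> Suc (Suc m) \<and> (lv y = Suc (Suc m) \<longrightarrow> adjacent z y)"
proof -
  have "facet_path (St \<alpha> C) P" "\<forall>H\<in>set P. z \<in> H" using D unfolding descent_def by blast+
  then have H: "P!i \<in> facets C" "\<alpha> \<subseteq> P!i" and z_in: "z \<in> P!i"
    using facet_path_St_nth[OF face _ y(1)] nth_mem[OF y(1)] by blast+
  have y_link: "y \<in> link_vertices \<alpha>" using facet_vertex_in_link[OF H y(2)] .
  have z_link: "z \<in> link_vertices \<alpha>" using facet_vertex_in_link[OF H] z_in z(1) by blast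
  consider "y = z" | "adjacent z y"
    using adjacent_if_in_face[OF facet_is_face[OF H(1)] z_in DiffD1[OF y(2)]] by blast
  then show ?thesis
  proof cases
    case 2
    then have "lv y \<le> Suc (lv z)" "lv z \<le> Suc (lv y)"
      using level_adjacent[OF z_link y_link] level_adjacent[OF y_link z_link] adjacent_sym by blast+
    then show ?thesis using z(2) 2 by simp
  qed (use z(2) in simp)
qed

lemma descent_avoids_until_last:
  assumes D: "descent m z P" and z: "z \<notin> \<alpha>" "lv z = Suc m"
  shows "avoids_until_last X P"
  unfolding avoids_until_last_def
proof (intro allI impI)
  fix i assume i: "Suc i < length P"
  show "P!i \<inter> X = {}"
  proof (rule ccontr)
    assume "P!i \<inter> X \<noteq> {}"
    then obtain y where y: "y \<in> P!i" "y \<in> X" by blast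
    then have y_out: "y \<in> P!i - \<alpha>" and "lv y = 0"
      using X_link level_zero_iff unfolding link_vertices_def by blast+
    then have "lv y = m" using descent_levels[OF D z, of i y] i by simp
    then show False using descent_level_m_last[OF D _ y_out] i by fastforce
  qed
qed

lemma descent_last:
  assumes "descent m z P"
  shows "P \<noteq> []" "last P = P!(length P - 1)" "length P - 1 < length P"
    and "last P \<in> facets C" "\<alpha> \<subseteq> last P"
proof -
  have fp: "facet_path (St \<alpha> C) P" using assms unfolding descent_def by blast
  then show ne: "P \<noteq> []" unfolding facet_path_def by blast
  then show "last P = P!(length P - 1)" "length P - 1 < length P" by (simp_all add: last_conv_nth)
  then show "last P \<in> facets C" "\<alpha> \<subseteq> last P" using facet_path_St_nth[OF face fp] by simp_all
qed

context
  fixes m z P' P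
  assumes descent: "descent m z P'" and z: "z \<notin> \<alpha>" "lv z = Suc m"
    and P: "first_hit_path \<alpha> X P" "hd P = last P'" "anchored m (last P') P"
begin

lemmas P'_last = descent_last[OF descent]

lemma descent_glue_nonempty: "P' \<noteq> []" "P \<noteq> []"
  using P'_last(1) P(1) unfolding first_hit_path_def facet_path_def by blast+

lemma descent_glue_nonrevisiting: "nonrevisiting (P' @ tl P)"
proof (rule nonrevisiting_glue)
  show "P' \<noteq> []" "P \<noteq> []" using descent_glue_nonempty .
  show "last P' = hd P" using P(2) by simp
  show "nonrevisiting P'" using descent unfolding descent_def by blast
  show "nonrevisiting P" using P(1) unfolding first_hit_path_def by blast
next
  fix y i k assume y: "i < length P'" "y \<in> P'!i" "k < length P" "y \<in> P!k"
  show "y \<in> last P'"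
  proof (cases "y \<in> \<alpha>")
    case True
    then show ?thesis using P'_last(4,5) by blast
  next
    case False
    then have "m \<le> lv y" "lv y \<le> Suc m \<and> (lv y = Suc m \<longrightarrow> (\<exists>t\<in>last P' - \<alpha>. lv t = m \<and> adjacent t y))"
      using descent_levels[OF descent z y(1)] anchoredD[OF P(3) y(3)] y(2,4) by blast+
    then consider "lv y = m" | t where "t \<in> last P' - \<alpha>" "lv t = m" "adjacent t y"
      by (metis le_SucE le_antisym)
    then show ?thesis
    proof cases
      case 1
      then have "Suc i = length P'" using descent_level_m_last[OF descent y(1)] y(2) False by blast
      then have "i = length P' - 1" by simp
      then show ?thesis using y(2) P'_last(2) by simp
    next
      case 2
      then have "y \<in> closed_nbhd {y\<in>last P' - \<alpha>. lv y = m}"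
        unfolding closed_nbhd_def using adjacent_sym[OF 2(3)] by blast
      moreover have "persistent (closed_nbhd {y\<in>last P' - \<alpha>. lv y = m}) P'"
        using descent unfolding descent_def by blast
      ultimately show ?thesis using persistent_last[OF _ _ y(1,2)] by blast
    qed
  qed
qed

lemma descent_glue_level_zero:
  assumes m0: "m = 0"
  shows "last P \<inter> X \<subseteq> {y\<in>last P' - \<alpha>. lv y = m}"
proof -
  obtain w where w: "w \<in> last P' - \<alpha>" "lv w = 0"
    using descent unfolding descent_def m0 by blast
  then have "w \<in> X" using level_zero_iff[OF facet_vertex_in_link[OF P'_last(4,5) w(1)]] by simp
  moreover have "w \<in> P!0" using w(1) P(2) descent_glue_nonempty(2) by (simp add: hd_conv_nth)
  moreover have "avoids_until_last X P" using P(1) unfolding first_hit_path_def by blast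
  moreover have "0 < length P" using descent_glue_nonempty(2) by simp
  ultimately have "length P = 1" using avoids_until_last_index[of X P 0 w] by simp
  then have "last P = last P'" using P(2) by (cases P) auto
  show ?thesis
  proof
    fix u assume u: "u \<in> last P \<inter> X"
    then have "u \<in> link_vertices \<alpha>" using X_link by blast
    then show "u \<in> {y\<in>last P' - \<alpha>. lv y = m}"
      using u level_zero_iff \<open>last P = last P'\<close> m0 unfolding link_vertices_def by simp
  qed
qed

text \<open>Vertices kept by \<open>P\<close> have level at most one, so along \<open>P'\<close> (levels at least \<open>m\<close>) they
  occur only in its last facet, unless \<open>m = 0\<close>, in which case \<open>P = [last P']\<close>.\<close>

lemma descent_glue_persistent: "persistent (closed_nbhd (last P \<inter> X)) P'"
  unfolding persistent_def
proof (intro ballI allI impI)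
  fix y i j assume y: "y \<in> closed_nbhd (last P \<inter> X)" and ij: "i \<le> j" "j < length P'" "y \<in> P'!i"
  have i: "i < length P'" using ij by simp
  have fp: "facet_path (St \<alpha> C) P'" using descent unfolding descent_def by blast
  show "y \<in> P'!j"
  proof (cases "y \<in> \<alpha>")
    case True
    then show ?thesis using facet_path_St_nth[OF face fp ij(2)] by blast
  next
    case False
    then have y_out: "y \<in> P'!i - \<alpha>" using ij(3) by blast
    then have "y \<in> link_vertices \<alpha>" using facet_path_St_nth[OF face fp i] facet_vertex_in_link by blast
    then have y_levels: "lv y \<le> 1" "m \<le> lv y"
      using level_closed_nbhd_X y descent_levels[OF descent z i y_out] by blast+
    show ?thesis
    proof (cases "lv y = m")
      case True
      then have "Suc i = length P'" using descent_level_m_last[OF descent i y_out] by blast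
      then have "j = i" using ij by simp
      then show ?thesis using ij by simp
    next
      case False
      then have "m = 0" using y_levels by simp
      then have "last P \<inter> X \<subseteq> {y\<in>last P' - \<alpha>. lv y = m}" by (rule descent_glue_level_zero)
      then have "y \<in> closed_nbhd {y\<in>last P' - \<alpha>. lv y = m}"
        using closed_nbhd_mono y by blast
      moreover have "persistent (closed_nbhd {y\<in>last P' - \<alpha>. lv y = m}) P'"
        using descent unfolding descent_def by blast
      ultimately show ?thesis using persistentD[OF _ _ ij] by blast
    qed
  qed
qed

lemma descent_glue_first_hit_path: "first_hit_path \<alpha> X (P' @ tl P)"
proof -
  note ne = descent_glue_nonempty
  have junction: "last P' = hd P" using P(2) by simp
  have "facet_path (St \<alpha> C) P'" using descent unfolding descent_def by blast
  show ?thesis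
    unfolding first_hit_path_def last_glue[OF ne junction]
  proof (intro conjI)
    show "facet_path (St \<alpha> C) (P' @ tl P)"
      using facet_path_glue \<open>facet_path (St \<alpha> C) P'\<close> P(1) junction unfolding first_hit_path_def
      by blast
    show "last P \<inter> X \<noteq> {}" using P(1) unfolding first_hit_path_def by blast
    show "avoids_until_last X (P' @ tl P)"
      using avoids_until_last_glue[OF ne junction descent_avoids_until_last[OF descent z]] P(1)
      unfolding first_hit_path_def by blast
    show "nonrevisiting (P' @ tl P)" using descent_glue_nonrevisiting .
    show "persistent (closed_nbhd (last P \<inter> X)) (P' @ tl P)"
      using persistent_glue[OF ne junction descent_glue_persistent] P(1)
      unfolding first_hit_path_def by blast
  qed
qed

lemma descent_glue_anchored: "anchored (Suc m) (hd P') (P' @ tl P)"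
  unfolding anchored_def
proof (intro allI impI ballI)
  fix i y assume i: "i < length (P' @ tl P)" and y: "y \<in> (P' @ tl P)!i - \<alpha>"
  note ne = descent_glue_nonempty
  have "z \<in> hd P'" using descent ne(1) unfolding descent_def by simp
  then have z_hd: "z \<in> hd P' - \<alpha>" using z(1) by blast
  show "lv y \<le> Suc (Suc m) \<and> (lv y = Suc (Suc m) \<longrightarrow> (\<exists>t\<in>hd P' - \<alpha>. lv t = Suc m \<and> adjacent t y))"
  proof (cases "i \<le> length P' - 1")
    case True
    then have "i < length P'" "y \<in> P'!i - \<alpha>"
      using y nth_glue_left[OF ne(1) True] P'_last(3) by simp_all
    from descent_levels[OF descent z this]
    show ?thesis using z_hd z(2) by blast
  next
    case False
    then have b: "length P' - 1 \<le> i" by simp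
    have "i - (length P' - 1) < length P" using i b unfolding length_glue[OF ne] by linarith
    moreover have "y \<in> P!(i - (length P' - 1)) - \<alpha>"
      using y nth_glue_right[OF ne P(2)[symmetric] b i] by simp
    ultimately have "lv y \<le> Suc m" using anchoredD[OF P(3)] by blast
    then show ?thesis by simp
  qed
qed

end

lemma first_hit_path_from_level:
  "S \<in> facets C \<Longrightarrow> \<alpha> \<subseteq> S \<Longrightarrow> \<forall>y\<in>S - \<alpha>. m \<le> lv y \<Longrightarrow> \<exists>y\<in>S - \<alpha>. lv y = m \<Longrightarrow>
    \<exists>P. first_hit_path \<alpha> X P \<and> hd P = S \<and> anchored m S P"
proof (induction m arbitrary: S)
  case 0
  obtain y0 where "y0 \<in> S - \<alpha>" "lv y0 = 0" using "0.prems"(4) by blast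
  then have "first_hit_path \<alpha> X [S] \<and> anchored 0 S [S]"
    using first_hit_path_level_zero[OF "0.prems"(1,2)] by blast
  then show ?case by (intro exI[of _ "[S]"]) simp
next
  case (Suc m)
  obtain z where z: "z \<in> S - \<alpha>" "lv z = Suc m" using Suc.prems(4) by blast
  then have z_out: "z \<notin> \<alpha>" by blast
  obtain P' where P': "descent m z P'" "hd P' = S" using descent_exists[OF Suc.prems(1-3) z] by blast
  note last_P' = descent_last[OF P'(1)]
  have "\<forall>y\<in>last P' - \<alpha>. m \<le> lv y"
    using descent_levels[OF P'(1) z_out z(2) last_P'(3)] unfolding last_P'(2) by blast
  moreover have "\<exists>y\<in>last P' - \<alpha>. lv y = m" using P'(1) unfolding descent_def by blast
  ultimately obtain P where P: "first_hit_path \<alpha> X P" "hd P = last P'" "anchored m (last P') P"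
    using Suc.IH[OF last_P'(4,5)] by blast
  have "first_hit_path \<alpha> X (P' @ tl P)" using descent_glue_first_hit_path[OF P'(1) z_out z(2) P] .
  moreover have "anchored (Suc m) S (P' @ tl P)"
    using descent_glue_anchored[OF P'(1) z_out z(2) P] unfolding P'(2) .
  moreover have "hd (P' @ tl P) = S" using last_P'(1) P'(2) by simp
  ultimately show ?case by blast
qed

lemma first_hit_path_layered:
  assumes F: "F \<in> facets C" "\<alpha> \<subseteq> F" "F \<noteq> \<alpha>"
  shows "\<exists>P. first_hit_path \<alpha> X P \<and> hd P = F"
proof -
  have fin: "finite (lv ` (F - \<alpha>))" using finite_face[OF facet_is_face[OF F(1)]] by simp
  have ne: "lv ` (F - \<alpha>) \<noteq> {}" using F(2,3) by blast
  define m where "m = Min (lv ` (F - \<alpha>))"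
  have "\<forall>y\<in>F - \<alpha>. m \<le> lv y" using Min_le[OF fin] unfolding m_def by blast
  moreover have "\<exists>y\<in>F - \<alpha>. lv y = m" using Min_in[OF fin ne] unfolding m_def by auto
  ultimately show ?thesis using first_hit_path_from_level[OF F(1,2)] by blast
qed

end

text \<open>In codimension one the link of \<open>\<alpha>\<close> has no edges, so with \<open>F = insert w \<alpha>\<close> and \<open>x \<in> X\<close> the
  vertex \<open>w\<close> is not a neighbour of \<open>x\<close> and one step to \<open>insert x \<alpha>\<close> suffices.\<close>

lemma first_hit_path_codim_one:
  assumes \<alpha>: "\<alpha> \<in> C" "card \<alpha> = d" and X: "X \<subseteq> link_vertices \<alpha>" "X \<noteq> {}"
    and F: "F \<in> facets C" "\<alpha> \<subseteq> F"
  shows "\<exists>P. first_hit_path \<alpha> X P \<and> hd P = F"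
proof -
  have fin\<alpha>: "finite \<alpha>" using finite_face[OF \<alpha>(1)] .
  have "card (F - \<alpha>) = 1" using card_facet[OF F(1)] \<alpha>(2) card_Diff_subset[OF fin\<alpha> F(2)] by simp
  then obtain w where "F - \<alpha> = {w}" using card_1_singletonE by blast
  then have Fw: "F = insert w \<alpha>" "w \<notin> \<alpha>" using F(2) by auto
  have X_out: "X \<inter> \<alpha> = {}" using X(1) unfolding link_vertices_def by blast
  show ?thesis
  proof (cases "w \<in> X")
    case True
    then have "first_hit_path \<alpha> X [F]" using first_hit_path_singleton[OF \<alpha>(1) F] Fw by blast
    then show ?thesis by (intro exI[of _ "[F]"]) simp
  next
    case False
    obtain x where x: "x \<in> X" using X(2) by blast
    then have x\<alpha>: "x \<notin> \<alpha>" "insert x \<alpha> \<in> C" using X(1) unfolding link_vertices_def by blast+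
    define G where "G = insert x \<alpha>"
    have xw: "x \<noteq> w" using x False by blast
    have card_G: "card G = Suc d" unfolding G_def using x\<alpha> fin\<alpha> \<alpha>(2) by simp
    have G: "G \<in> facets C" "\<alpha> \<subseteq> G" using facet_if_card x\<alpha>(2) card_G unfolding G_def by blast+
    have "F \<inter> G = \<alpha>" using Fw xw x\<alpha> unfolding G_def by blast
    then have "ridge_adj F G" unfolding ridge_adj_def using card_G card_facet[OF F(1)] \<alpha>(2) by simp
    then have path: "facet_path (St \<alpha> C) [F, G]" unfolding facet_path_def using F G \<alpha>(1) by simp
    have GX: "G \<inter> X = {x}" using x X_out unfolding G_def by blast
    have FX: "F \<inter> X = {}" using Fw False X_out by blast
    have "\<forall>u\<in>\<alpha>. adjacent x u" using adjacent_if_in_face[OF x\<alpha>(2), of x] x\<alpha>(1) by blast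
    moreover have "x \<notin> F" using Fw xw x\<alpha>(1) by blast
    ultimately have not_adjacent: "\<not> adjacent w x"
      using facet_no_common_neighbour[OF F(1)] adjacent_sym unfolding Fw(1) by blast
    have "closed_nbhd (G \<inter> X) \<inter> F \<subseteq> G"
      using not_adjacent Fw xw G(2) unfolding GX closed_nbhd_def by blast
    then have "first_hit_path \<alpha> X [F, G]"
      unfolding first_hit_path_def avoids_until_last_def
      using path GX FX nonrevisiting_doubleton persistent_doubleton by (auto simp: less_Suc_eq)
    then show ?thesis by (intro exI[of _ "[F, G]"]) simp
  qed
qed

lemma first_hit_path_exists:
  "\<alpha> \<in> C \<Longrightarrow> X \<subseteq> link_vertices \<alpha> \<Longrightarrow> X \<noteq> {} \<Longrightarrow> F \<in> facets C \<Longrightarrow> \<alpha> \<subseteq> F \<Longrightarrow>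
    \<exists>P. first_hit_path \<alpha> X P \<and> hd P = F"
proof (induction "Suc d - card \<alpha>" arbitrary: \<alpha> X F rule: less_induct)
  case less
  have "card \<alpha> \<le> Suc d" using card_face_le less.prems(1) by blast
  then consider "card \<alpha> + 2 \<le> Suc d" | "card \<alpha> = d" | "card \<alpha> = Suc d" by linarith
  then show ?case
  proof cases
    case 1
    have larger_faces: "\<exists>P. first_hit_path \<alpha>' X' P \<and> hd P = F'"
      if "\<alpha>' \<in> C" "card \<alpha> < card \<alpha>'" "X' \<subseteq> link_vertices \<alpha>'" "X' \<noteq> {}" "F' \<in> facets C" "\<alpha>' \<subseteq> F'"
      for \<alpha>' X' F'
      using less.hyps[of \<alpha>' X' F'] that card_face_le[OF that(1)] by simp
    have "F \<noteq> \<alpha>" using card_facet[OF less.prems(4)] 1 by auto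
    then show ?thesis
      using first_hit_path_layered[OF less.prems(1,2) link_layering[OF less.prems(1) 1 less.prems(2,3)]
          larger_faces less.prems(4,5)] by blast
  next
    case 2
    then show ?thesis using first_hit_path_codim_one less.prems by blast
  next
    case 3
    obtain x where "x \<in> link_vertices \<alpha>" using less.prems(2,3) by blast
    then have "insert x \<alpha> \<in> C" "card (insert x \<alpha>) = Suc (card \<alpha>)"
      using finite_face[OF less.prems(1)] unfolding link_vertices_def by simp_all
    then show ?thesis using card_face_le 3 by fastforce
  qed
qed

text \<open>Every vertex of the star of \<open>insert v \<alpha>\<close> other than \<open>v\<close> is adjacent to \<open>v\<close>, so persistence
  of the neighbourhood of \<open>v\<close> along the first path makes the concatenation non-revisiting.\<close>

lemma first_hit_path_glue_nonrevisiting: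
  assumes P1: "first_hit_path \<alpha> {v} P1" and v: "insert v \<alpha> \<in> C"
    and P2: "facet_path (St (insert v \<alpha>) C) P2" "hd P2 = last P1" "nonrevisiting P2"
  shows "nonrevisiting (P1 @ tl P2)"
proof (rule nonrevisiting_glue)
  show "P1 \<noteq> []" using P1 unfolding first_hit_path_def facet_path_def by blast
  show "P2 \<noteq> []" using P2(1) unfolding facet_path_def by blast
  show "last P1 = hd P2" using P2(2) by simp
  show "nonrevisiting P1" using P1 unfolding first_hit_path_def by blast
  show "nonrevisiting P2" using P2(3) .
next
  have v_last: "v \<in> last P1" using P1 unfolding first_hit_path_def by blast
  fix y i k assume y: "i < length P1" "y \<in> P1!i" "k < length P2" "y \<in> P2!k"
  show "y \<in> last P1"
  proof (cases "y = v")
    case False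
    have "P2!k \<in> facets C" "insert v \<alpha> \<subseteq> P2!k" using facet_path_St_nth[OF v P2(1) y(3)] by blast+
    then have "adjacent y v" using adjacent_if_in_face[OF facet_is_face, of "P2!k" y v] y(4) False by blast
    then have "y \<in> closed_nbhd (last P1 \<inter> {v})" using v_last unfolding closed_nbhd_def by blast
    moreover have "persistent (closed_nbhd (last P1 \<inter> {v})) P1"
      using P1 unfolding first_hit_path_def by blast
    ultimately show ?thesis using persistent_last[OF _ _ y(1,2)] by blast
  qed (use v_last in blast)
qed

lemma nonrevisiting_path_in_star:
  "\<alpha> \<in> C \<Longrightarrow> F \<in> facets C \<Longrightarrow> \<alpha> \<subseteq> F \<Longrightarrow> G \<in> facets C \<Longrightarrow> \<alpha> \<subseteq> G \<Longrightarrow>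
    \<exists>P. facet_path (St \<alpha> C) P \<and> hd P = F \<and> last P = G \<and> nonrevisiting P"
proof (induction "Suc d - card \<alpha>" arbitrary: \<alpha> F rule: less_induct)
  case less
  note \<alpha> = less.prems(1) and F = less.prems(2,3) and G = less.prems(4,5)
  show ?case
  proof (cases "F = G")
    case True
    then have "facet_path (St \<alpha> C) [F] \<and> nonrevisiting [F]"
      using facet_path_St_singleton[OF \<alpha> F] nonrevisiting_singleton by blast
    then show ?thesis using True by (intro exI[of _ "[F]"]) simp
  next
    case False
    then have "\<not> G \<subseteq> F" using facet_maximal[OF G(1) facet_is_face[OF F(1)]] by blast
    then obtain v where v: "v \<in> G" "v \<notin> F" by blast
    then have v_link: "v \<in> link_vertices \<alpha>"
      using link_vertices_if_in_face[OF facet_is_face[OF G(1)] G(2)] F(2) by blast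
    obtain P1 where P1: "first_hit_path \<alpha> {v} P1" "hd P1 = F"
      using first_hit_path_exists[OF \<alpha> _ _ F] v_link by blast
    have P1_ne: "P1 \<noteq> []" using P1(1) unfolding first_hit_path_def facet_path_def by blast
    have "facet_path (St \<alpha> C) P1" using P1(1) unfolding first_hit_path_def by blast
    then have last_P1: "last P1 \<in> facets C" "\<alpha> \<subseteq> last P1"
      using facet_path_St_nth[OF \<alpha> _, of P1 "length P1 - 1"] P1_ne by (simp_all add: last_conv_nth)
    define \<alpha>' where "\<alpha>' = insert v \<alpha>"
    have \<alpha>': "\<alpha>' \<in> C" "\<alpha> \<subseteq> \<alpha>'" using v_link unfolding \<alpha>'_def link_vertices_def by blast+
    have "card \<alpha>' = Suc (card \<alpha>)" using finite_face[OF \<alpha>] v_link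
      unfolding \<alpha>'_def link_vertices_def by simp
    then have smaller: "Suc d - card \<alpha>' < Suc d - card \<alpha>" using card_face_le[OF \<alpha>'(1)] by linarith
    obtain P2 where P2: "facet_path (St \<alpha>' C) P2" "hd P2 = last P1" "last P2 = G" "nonrevisiting P2"
      using less.hyps[OF smaller \<alpha>'(1) last_P1(1) _ G(1)] last_P1(2) G(2) v P1(1)
      unfolding \<alpha>'_def first_hit_path_def by blast
    have P2_ne: "P2 \<noteq> []" using P2(1) unfolding facet_path_def by blast
    have junction: "last P1 = hd P2" using P2(2) by simp
    have "nonrevisiting (P1 @ tl P2)"
      using first_hit_path_glue_nonrevisiting[OF P1(1) \<alpha>'(1)[unfolded \<alpha>'_def]] P2 unfolding \<alpha>'_def
      by blast
    moreover have "facet_path (St \<alpha> C) (P1 @ tl P2)"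
      using facet_path_glue[OF \<open>facet_path (St \<alpha> C) P1\<close> facet_path_St_mono[OF \<alpha> \<alpha>' P2(1)] junction] .
    moreover have "hd (P1 @ tl P2) = F" "last (P1 @ tl P2) = G"
      using P1(2) P1_ne P2(3) last_glue[OF P1_ne P2_ne junction] by simp_all
    ultimately show ?thesis by blast
  qed
qed

section \<open>Non-revisiting paths and the diameter\<close>

lemma St_empty: "St {} C = C"
  unfolding St_def by blast

lemma facet_in_St_vertex_iff: "F \<in> facets C \<Longrightarrow> F \<in> St {v} C \<longleftrightarrow> v \<in> F"
  unfolding St_def using facet_is_face facet_maximal by blast

lemma nonrevisiting_path_length:
  assumes P: "facet_path C P" "nonrevisiting P"
  shows "length P - 1 \<le> card (vertices C) - Suc d"
proof -
  define L where "L = length P - 1"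
  have L: "L < length P" using P(1) unfolding facet_path_def L_def by simp
  have P_facets: "P!i \<in> facets C" if "i < length P" for i
    using P(1) nth_mem[OF that] unfolding facet_path_def by blast
  have "\<exists>y\<in>P!i. \<forall>j. i < j \<longrightarrow> j < length P \<longrightarrow> y \<notin> P!j" if "i < L" for i
    using nonrevisiting_abandons_vertex[OF P] that unfolding L_def by simp
  then obtain u where u: "\<And>i. i < L \<Longrightarrow> u i \<in> P!i \<and> (\<forall>j. i < j \<longrightarrow> j < length P \<longrightarrow> u i \<notin> P!j)"
    by metis
  have "inj_on u {..<L}"
  proof (rule inj_onI)
    fix i j assume ij: "i \<in> {..<L}" "j \<in> {..<L}" "u i = u j"
    then show "i = j" using u[of i] u[of j] L by (metis lessThan_iff linorder_neqE_nat order.strict_trans)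
  qed
  moreover have "u ` {..<L} \<subseteq> vertices C - P!L"
  proof
    fix y assume "y \<in> u ` {..<L}"
    then obtain i where i: "i < L" "y = u i" by blast
    then have "y \<in> P!i" "y \<notin> P!L" using u L by simp_all
    moreover have "P!i \<subseteq> vertices C" using P_facets i(1) L face_in_vertices facet_is_face by simp
    ultimately show "y \<in> vertices C - P!L" by blast
  qed
  ultimately have "card {..<L} \<le> card (vertices C - P!L)"
    using card_inj_on_le finite_vertices by blast
  moreover have "card (P!L) = Suc d" "P!L \<subseteq> vertices C"
    using card_facet P_facets[OF L] face_in_vertices facet_is_face by blast+
  ultimately show ?thesis
    using card_Diff_subset[OF finite_subset[OF _ finite_vertices]] unfolding L_def by simp
qed

lemma short_nonrevisiting_path:
  assumes "F \<in> facets C" "G \<in> facets C"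
  shows "\<exists>P. path_between C P F G \<and> non_revisiting C P \<and> length P - 1 \<le> card (vertices C) - Suc d"
proof -
  have "{} \<in> C" using simplicial unfolding simplicial_complex_def by blast
  then obtain P where P: "facet_path C P" "hd P = F" "last P = G" "nonrevisiting P"
    using nonrevisiting_path_in_star[of "{}" F G] assms unfolding St_empty by blast
  have "non_revisiting C P"
    unfolding non_revisiting_def
  proof (intro ballI allI impI)
    fix v i j k assume ijk: "i \<le> k \<and> k \<le> j \<and> j < length P \<and> P!i \<in> St {v} C \<and> P!j \<in> St {v} C"
    have facets: "P!l \<in> facets C" if "l < length P" for l using P(1) that unfolding facet_path_def by auto
    then have "v \<in> P!i" "v \<in> P!j" using ijk facet_in_St_vertex_iff by auto
    then have "v \<in> P!k" using nonrevisitingD[OF P(4), of i k j v] ijk by blast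
    then show "P!k \<in> St {v} C" using facets facet_in_St_vertex_iff ijk by auto
  qed
  then show ?thesis
    using P nonrevisiting_path_length[OF P(1,4)] unfolding path_between_def by blast
qed

theorem non_revisiting_path_property: "non_revisiting_path_property C"
  unfolding non_revisiting_path_property_def using short_nonrevisiting_path by blast

theorem diam_le: "diam C \<le> card (vertices C) - Suc d"
proof -
  have dist: "facet_dist C F G \<le> card (vertices C) - Suc d"
    if FG: "F \<in> facets C" "G \<in> facets C" for F G
  proof -
    obtain P where P: "path_between C P F G" "length P - 1 \<le> card (vertices C) - Suc d"
      using short_nonrevisiting_path[OF FG] by blast
    then have "length P = (length P - 1) + 1" unfolding path_between_def facet_path_def by simp
    then have "facet_dist C F G \<le> length P - 1"
      unfolding facet_dist_def using P(1) by (intro Least_le) blast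
    then show ?thesis using P(2) by simp
  qed
  define D where "D = {facet_dist C F G | F G. F \<in> facets C \<and> G \<in> facets C}"
  have bounded: "\<forall>k\<in>D. k \<le> card (vertices C) - Suc d" unfolding D_def using dist by blast
  then have "finite D" using finite_nat_set_iff_bounded_le by blast
  moreover obtain F0 where "F0 \<in> facets C"
    using face_in_facet simplicial unfolding simplicial_complex_def by metis
  then have "D \<noteq> {}" unfolding D_def by blast
  ultimately show ?thesis using bounded unfolding diam_def D_def[symmetric] by simp
qed

end

lemma normal_flag_complexI:
  assumes sc: "simplicial_complex C" and fin: "finite C" and dim: "has_dim C d"
    and nor: "normal C" and "flag C"
  shows "normal_flag_complex C d"
proof
  show "simplicial_complex C" "finite C" "flag C" by fact+
  show "card \<sigma> \<le> Suc d" if "\<sigma> \<in> C" for \<sigma> using dim that unfolding has_dim_def by simp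
  show "dual_connected (St \<sigma> C)" if "\<sigma> \<in> C" for \<sigma> using nor that unfolding normal_def by blast
  fix F assume F: "F \<in> facets C"
  obtain \<sigma> where \<sigma>: "\<sigma> \<in> C" "card \<sigma> = Suc d" using dim unfolding has_dim_def by auto
  obtain G where G: "G \<in> facets C" "\<sigma> \<subseteq> G" by (rule face_in_facet_finite[OF fin \<sigma>(1)])
  have "G \<in> C" using G(1) unfolding facets_def by simp
  then have "finite G" "card G \<le> Suc d"
    using sc dim unfolding simplicial_complex_def has_dim_def by auto
  then have "card G = Suc d" using card_mono[OF \<open>finite G\<close> G(2)] \<sigma>(2) by linarith
  moreover have "card F = card G" using nor F G(1) unfolding normal_def pure_def by blast
  ultimately show "card F = Suc d" by simp
qed

theorem theorem1p1:
  fixes C :: "'a set set" and d n :: nat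
  assumes "simplicial_complex C"
    and "finite C"
    and "has_dim C d"
    and "card (vertices C) = n"
    and "normal C"
    and "flag C"
  shows "non_revisiting_path_property C \<and> diam C \<le> n - d - 1"
proof -
  interpret normal_flag_complex C d using normal_flag_complexI[OF assms(1-3,5,6)] .
  show ?thesis using non_revisiting_path_property diam_le assms(4) by simp
qed

end
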